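(* Let $L\subset\mathbf{R}^n$ be an $n$-dimensional lattice and let $H$ be a lamina of $L$. Consider the family of parallel laminae $\{H+v: v\in L\}$, which partitions $L$ into parallel layers. Then every Delaunay polytope of $L$ lies between two neighboring hyperplanes of this family, and all its vertices lie on these two hyperplanes.
   Context: An empty sphere is a sphere with no lattice point in its interior; a Delaunay polytope of $L$ is the convex hull of all lattice points lying on an empty sphere, when this hull is $n$-dimensional; Delaunay polytopes form the Delaunay partition of $\mathbf{R}^n$. A hyperplane $H$ such that $H\cap L$ is an $(n-1)$-dimensional sub-lattice of $L$ is a lamina of $L$ if every $(n-1)$-dimensional Delaunay polytope of the lattice $L\cap H$ (within $H$) is a facet of a Delaunay polytope of $L$, i.e. $H$ is partitioned into facets of Delaunay polytopes of $L$. Two hyperplanes of the family $\{H+v:v\in L\}$ are neighboring if no hyperplane of the family lies strictly between them. *)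

theory Defs
  imports "HOL-Analysis.Analysis"
begin

definition is_lattice :: "(real^'n) set \<Rightarrow> bool" where
  "is_lattice L \<longleftrightarrow> (\<exists>b :: 'n \<Rightarrow> real^'n. inj b \<and> independent (range b) \<and>
      L = {(\<Sum>i\<in>UNIV. real_of_int (c i) *\<^sub>R b i) | c. True})"

definition empty_sphere :: "(real^'n) set \<Rightarrow> real^'n \<Rightarrow> real \<Rightarrow> bool" where
  "empty_sphere L c r \<longleftrightarrow> (\<forall>v\<in>L. r \<le> dist c v)"

definition delaunay_polytope :: "(real^'n) set \<Rightarrow> (real^'n) set \<Rightarrow> bool" where
  "delaunay_polytope L P \<longleftrightarrow> (\<exists>c r. empty_sphere L c r \<and>
      P = convex hull (L \<inter> sphere c r) \<and> aff_dim P = int CARD('n))"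

text \<open>(n-1)-dimensional Delaunay polytope of the sublattice L \<inter> H inside the hyperplane H
  (spheres within H are traces of spheres of R^n centred in H).\<close>
definition delaunay_polytope_in :: "(real^'n) set \<Rightarrow> (real^'n) set \<Rightarrow> (real^'n) set \<Rightarrow> bool" where
  "delaunay_polytope_in L H Q \<longleftrightarrow> (\<exists>c r. c \<in> H \<and> empty_sphere (L \<inter> H) c r \<and>
      Q = convex hull ((L \<inter> H) \<inter> sphere c r) \<and> aff_dim Q = int CARD('n) - 1)"

definition lattice_hyperplane :: "(real^'n) set \<Rightarrow> (real^'n) set \<Rightarrow> bool" where
  "lattice_hyperplane L H \<longleftrightarrow> subspace H \<and> dim H = CARD('n) - 1 \<and> dim (H \<inter> L) = CARD('n) - 1"

definition lamina :: "(real^'n) set \<Rightarrow> (real^'n) set \<Rightarrow> bool" where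
  "lamina L H \<longleftrightarrow> lattice_hyperplane L H \<and>
     (\<forall>Q. delaunay_polytope_in L H Q \<longrightarrow> (\<exists>P. delaunay_polytope L P \<and> Q facet_of P))"

definition translates :: "(real^'n) set \<Rightarrow> (real^'n) set \<Rightarrow> (real^'n) set set" where
  "translates L H = {(\<lambda>x. x + v) ` H | v. v \<in> L}"

definition neighboring :: "(real^'n) set \<Rightarrow> (real^'n) set \<Rightarrow> (real^'n) set \<Rightarrow> (real^'n) set \<Rightarrow> bool" where
  "neighboring L H A B \<longleftrightarrow> A \<in> translates L H \<and> B \<in> translates L H \<and> A \<noteq> B \<and>
     \<not> (\<exists>C\<in>translates L H. C \<noteq> A \<and> C \<noteq> B \<and> C \<subseteq> convex hull (A \<union> B))"

end

theory Submission
  imports Defs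
begin

text \<open>Write H = {x. w \<bullet> x = 0}. If some lattice level {x. w \<bullet> x = w \<bullet> v}, v \<in> L, passed
  strictly between two vertices of a Delaunay polytope P, then the Delaunay polytope P - v would
  have interior points on H. But H is covered by the Delaunay polytopes of L \<inter> H, each of which
  is a facet of a Delaunay polytope P' of L, since H is a lamina. A facet of P' meeting the
  interior of P - v forces P - v = P' (the power of a point with respect to the two circumspheres
  differs by an affine function that vanishes where the interiors overlap), and a proper face
  cannot meet the interior. Hence all vertices of P lie on the lowest and highest lattice level
  met by P, and no lattice level lies between these two.

  That the Delaunay polytopes of L \<inter> H cover H is shown with powers of points: minimising the
  power of x over the empty spheres centred in H gives a sphere whose contact points contain x in
  their convex hull, and such a sphere can be moved until its contacts span H.\<close>

section \<open>Convex geometry\<close>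

lemma bounded_quadratic_sublevel: "bounded {y::'a::real_inner. y \<bullet> y \<le> c \<bullet> y + d}"
proof -
  have "norm y \<le> max 1 (norm c + \<bar>d\<bar>)" if "y \<bullet> y \<le> c \<bullet> y + d" for y
  proof (rule ccontr)
    assume "\<not> ?thesis"
    then have y1: "1 < norm y" and y2: "norm c + \<bar>d\<bar> < norm y" by auto
    have "norm y * norm y = y \<bullet> y" by (simp add: dot_square_norm power2_eq_square)
    also have "\<dots> \<le> norm c * norm y + \<bar>d\<bar>" using that Cauchy_Schwarz_ineq2[of c y] by linarith
    also have "\<dots> \<le> (norm c + \<bar>d\<bar>) * norm y" using y1 by (simp add: algebra_simps mult_le_cancel_left1)
    also have "\<dots> < norm y * norm y" using y1 y2 by (intro mult_strict_right_mono) auto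
    finally show False by simp
  qed
  then show ?thesis unfolding bounded_iff by blast
qed

lemma separating_hyperplane_in_subspace:
  fixes K :: "'a::euclidean_space set"
  assumes "subspace S" "closed K" "convex K" "x \<in> S" "x \<notin> K"
  obtains u m where "u \<in> S" "m < u \<bullet> x" "\<And>y. y \<in> K \<Longrightarrow> y \<in> S \<Longrightarrow> u \<bullet> y < m"
proof -
  obtain u0 b where u0: "u0 \<bullet> x < b" "\<And>y. y \<in> K \<Longrightarrow> b < u0 \<bullet> y"
    using separating_hyperplane_closed_point[OF assms(3,2,5)] by blast
  obtain v w where v: "v \<in> span S" "u0 = v + w" and w: "\<And>y. y \<in> span S \<Longrightarrow> orthogonal w y"
    using orthogonal_subspace_decomp_exists by metis
  have proj: "u0 \<bullet> y = v \<bullet> y" if "y \<in> S" for y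
    using w[of y] that v(2) span_base by (force simp: orthogonal_def inner_add_left)
  show thesis
  proof
    show "- v \<in> S" using v(1) assms(1) span_eq_iff[of S] by (metis subspace_neg)
    show "- b < - v \<bullet> x" using u0(1) proj[OF assms(4)] by simp
    show "- v \<bullet> y < - b" if "y \<in> K" "y \<in> S" for y using u0(2)[OF that(1)] proj[OF that(2)] by simp
  qed
qed

lemma exists_normal_in_subspace:
  fixes C :: "'a::euclidean_space set"
  assumes S: "subspace S" and "C \<subseteq> S" "p \<in> C" "aff_dim C < dim S"
  obtains u where "u \<in> S" "u \<noteq> 0" "\<And>q. q \<in> C \<Longrightarrow> u \<bullet> q = u \<bullet> p"
proof -
  define D where "D = (\<lambda>q. q - p) ` C"
  have "aff_dim C = dim D" unfolding D_def
    using assms(3) by (intro aff_dim_eq_dim_subtract) (simp add: hull_inc)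
  moreover have "D \<subseteq> S" unfolding D_def using assms(2,3) S by (auto intro: subspace_diff)
  ultimately have "span D \<subset> span S"
    using assms(4) by (metis dim_span less_le of_nat_less_iff span_mono)
  then obtain u where "u \<noteq> 0" "u \<in> span S" and u: "\<And>y. y \<in> span D \<Longrightarrow> orthogonal u y"
    using orthogonal_to_subspace_exists_gen by blast
  moreover have "u \<bullet> q = u \<bullet> p" if "q \<in> C" for q
    using u[of "q - p"] that unfolding D_def orthogonal_def
    by (simp add: span_base inner_diff_right)
  ultimately show thesis using that S span_eq_iff[of S] by metis
qed

lemma inner_const_on_open_imp_zero:
  fixes d :: "'a::real_inner"
  assumes "open U" "x \<in> U" "\<And>y. y \<in> U \<Longrightarrow> d \<bullet> y = k"
  shows "d = 0"
proof (rule ccontr)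
  assume "d \<noteq> 0"
  obtain e where "0 < e" "ball x e \<subseteq> U" using assms(1,2) open_contains_ball by blast
  define s where "s = e / (2 * norm d)"
  have "0 < s" unfolding s_def using \<open>0 < e\<close> \<open>d \<noteq> 0\<close> by simp
  have "norm (s *\<^sub>R d) < e" unfolding s_def using \<open>0 < e\<close> \<open>d \<noteq> 0\<close> by simp
  then have "x + s *\<^sub>R d \<in> U" using \<open>ball x e \<subseteq> U\<close> by (auto simp: dist_norm)
  then have "d \<bullet> x + s * (d \<bullet> d) = d \<bullet> x"
    using assms(3)[of "x + s *\<^sub>R d"] assms(3)[OF assms(2)] by (simp add: inner_add_right)
  then show False using \<open>0 < s\<close> \<open>d \<noteq> 0\<close> by simp
qed

lemma convex_interior_meets_hyperplane:
  fixes P :: "'a::euclidean_space set"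
  assumes "convex P" "interior P \<noteq> {}" "p \<in> P" "q \<in> P" "w \<bullet> p < b" "b < w \<bullet> q"
  obtains x where "x \<in> interior P" "w \<bullet> x = b"
proof -
  have P: "P \<subseteq> closure (interior P)"
    using convex_closure_interior[OF assms(1,2)] closure_subset by blast
  have "{y. w \<bullet> y < b} \<inter> closure (interior P) \<noteq> {}" using assms(3,5) P by blast
  then obtain p' where p': "p' \<in> interior P" "w \<bullet> p' < b"
    by (auto simp: open_Int_closure_eq_empty open_halfspace_lt)
  have "{y. b < w \<bullet> y} \<inter> closure (interior P) \<noteq> {}" using assms(4,6) P by blast
  then obtain q' where q': "q' \<in> interior P" "b < w \<bullet> q'"
    by (auto simp: open_Int_closure_eq_empty open_halfspace_gt)
  show thesis
    using connected_ivt_hyperplane[OF convex_connected[OF convex_interior[OF assms(1)]] p'(1) q'(1)]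
      less_imp_le[OF p'(2)] less_imp_le[OF q'(2)] that by blast
qed

lemma full_dim_set_on_two_levels:
  fixes V :: "'a::euclidean_space set"
  assumes "finite V" "aff_dim V = DIM('a)" "w \<noteq> 0"
    and gap: "\<And>p q y. p \<in> V \<Longrightarrow> q \<in> V \<Longrightarrow> y \<in> V \<Longrightarrow> \<not> (w \<bullet> p < w \<bullet> y \<and> w \<bullet> y < w \<bullet> q)"
  obtains p q where "p \<in> V" "q \<in> V" "w \<bullet> p < w \<bullet> q" "V \<subseteq> {y. w \<bullet> y = w \<bullet> p} \<union> {y. w \<bullet> y = w \<bullet> q}"
proof -
  have "V \<noteq> {}" using assms(2) by auto
  obtain p where p: "p \<in> V" "\<And>y. y \<in> V \<Longrightarrow> w \<bullet> p \<le> w \<bullet> y"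
    using arg_min_if_finite(1)[OF assms(1) \<open>V \<noteq> {}\<close>, of "\<lambda>y. w \<bullet> y"]
      arg_min_least[OF assms(1) \<open>V \<noteq> {}\<close>, of _ "\<lambda>y. w \<bullet> y"] by blast
  obtain q where q: "q \<in> V" "\<And>y. y \<in> V \<Longrightarrow> - (w \<bullet> q) \<le> - (w \<bullet> y)"
    using arg_min_if_finite(1)[OF assms(1) \<open>V \<noteq> {}\<close>, of "\<lambda>y. - (w \<bullet> y)"]
      arg_min_least[OF assms(1) \<open>V \<noteq> {}\<close>, of _ "\<lambda>y. - (w \<bullet> y)"] by blast
  have "w \<bullet> p < w \<bullet> q"
  proof (rule ccontr)
    assume "\<not> w \<bullet> p < w \<bullet> q"
    then have "V \<subseteq> {y. w \<bullet> y = w \<bullet> p}" using p q by force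
    then have "aff_dim V \<le> aff_dim {y. w \<bullet> y = w \<bullet> p}" by (rule aff_dim_subset)
    then show False using assms(2,3) by simp
  qed
  moreover have "V \<subseteq> {y. w \<bullet> y = w \<bullet> p} \<union> {y. w \<bullet> y = w \<bullet> q}"
    using p q gap[OF p(1) q(1)] by force
  ultimately show thesis using that p(1) q(1) by blast
qed

lemma translation_hyperplane: "(\<lambda>x. x + v) ` {x. w \<bullet> x = 0} = {y. w \<bullet> y = w \<bullet> v}"
proof
  show "(\<lambda>x. x + v) ` {x. w \<bullet> x = 0} \<subseteq> {y. w \<bullet> y = w \<bullet> v}" by (auto simp: inner_add_right)
  show "{y. w \<bullet> y = w \<bullet> v} \<subseteq> (\<lambda>x. x + v) ` {x. w \<bullet> x = 0}"
  proof
    fix y assume "y \<in> {y. w \<bullet> y = w \<bullet> v}"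
    then have "y - v \<in> {x. w \<bullet> x = 0}" by (simp add: inner_diff_right)
    then show "y \<in> (\<lambda>x. x + v) ` {x. w \<bullet> x = 0}" by (rule rev_image_eqI) simp
  qed
qed

section \<open>Lattices\<close>

lemma is_latticeE:
  fixes L :: "(real^'n) set"
  assumes "is_lattice L"
  obtains b :: "'n \<Rightarrow> real^'n" where "inj b" "independent (range b)"
    "L = range (\<lambda>c. \<Sum>i\<in>UNIV. real_of_int (c i) *\<^sub>R b i)"
  using assms unfolding is_lattice_def by (auto simp: full_SetCompr_eq)

lemma lattice_zero: "is_lattice L \<Longrightarrow> 0 \<in> L"
  by (erule is_latticeE) (auto intro: range_eqI[of _ _ "\<lambda>_. 0"])

lemma lattice_add:
  fixes L :: "(real^'n) set"
  assumes "is_lattice L" "x \<in> L" "y \<in> L"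
  shows "x + y \<in> L"
proof -
  obtain b :: "'n \<Rightarrow> real^'n" where L: "L = range (\<lambda>c. \<Sum>i\<in>UNIV. real_of_int (c i) *\<^sub>R b i)"
    using is_latticeE[OF assms(1)] by blast
  obtain c d where "x = (\<Sum>i\<in>UNIV. real_of_int (c i) *\<^sub>R b i)" "y = (\<Sum>i\<in>UNIV. real_of_int (d i) *\<^sub>R b i)"
    using assms(2,3) L by blast
  then have "x + y = (\<Sum>i\<in>UNIV. real_of_int (c i + d i) *\<^sub>R b i)"
    by (simp add: sum.distrib scaleR_add_left)
  then show ?thesis unfolding L image_iff by (intro bexI[OF _ UNIV_I])
qed

lemma lattice_scaleR_of_int:
  fixes L :: "(real^'n) set"
  assumes "is_lattice L" "x \<in> L"
  shows "real_of_int k *\<^sub>R x \<in> L"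
proof -
  obtain b :: "'n \<Rightarrow> real^'n" where L: "L = range (\<lambda>c. \<Sum>i\<in>UNIV. real_of_int (c i) *\<^sub>R b i)"
    using is_latticeE[OF assms(1)] by blast
  obtain c where "x = (\<Sum>i\<in>UNIV. real_of_int (c i) *\<^sub>R b i)"
    using assms(2) L by blast
  then have "real_of_int k *\<^sub>R x = (\<Sum>i\<in>UNIV. real_of_int (k * c i) *\<^sub>R b i)"
    by (simp add: scaleR_sum_right)
  then show ?thesis unfolding L image_iff by (intro bexI[OF _ UNIV_I])
qed

lemma lattice_diff: "is_lattice L \<Longrightarrow> x \<in> L \<Longrightarrow> y \<in> L \<Longrightarrow> x - y \<in> L"
  using lattice_add[of L x "real_of_int (-1) *\<^sub>R y"] lattice_scaleR_of_int[of L y "-1"] by simp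

lemma lattice_sum:
  assumes "is_lattice L" "\<And>s. s \<in> S \<Longrightarrow> f s \<in> L"
  shows "sum f S \<in> L"
  using assms(2)
  by (induction S rule: infinite_finite_induct) (auto intro: lattice_zero lattice_add assms(1))

lemma lattice_translation: "is_lattice L \<Longrightarrow> v \<in> L \<Longrightarrow> (+) v ` L = L"
  by (auto intro: lattice_add image_eqI[of _ _ "_ - v"] lattice_diff)

lemma inj_basis_combination:
  fixes b :: "'n \<Rightarrow> real^'n"
  assumes "inj b" "independent (range b)"
  shows "inj (\<lambda>v::real^'n. \<Sum>i\<in>UNIV. v $ i *\<^sub>R b i)"
proof -
  have "v = 0" if "(\<Sum>i\<in>UNIV. v $ i *\<^sub>R b i) = 0" for v :: "real^'n"
  proof -
    have "(\<Sum>x\<in>range b. v $ inv b x *\<^sub>R x) = 0"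
      using that by (simp add: sum.reindex[OF assms(1)] inv_f_f[OF assms(1)])
    then have "v $ inv b (b i) = 0" for i
      using assms(2) by (subst (asm) dependent_finite) auto
    then show ?thesis by (simp add: inv_f_f[OF assms(1)] vec_eq_iff)
  qed
  moreover have "linear (\<lambda>v::real^'n. \<Sum>i\<in>UNIV. v $ i *\<^sub>R b i)"
    by (intro linearI) (simp_all add: sum.distrib scaleR_add_left scaleR_sum_right)
  ultimately show ?thesis using linear_inj_iff_eq_0 by blast
qed

lemma finite_lattice_Int_bounded:
  fixes L :: "(real^'n) set"
  assumes "is_lattice L" "bounded S"
  shows "finite (L \<inter> S)"
proof -
  obtain b :: "'n \<Rightarrow> real^'n" where b: "inj b" "independent (range b)"
    and L: "L = range (\<lambda>c. \<Sum>i\<in>UNIV. real_of_int (c i) *\<^sub>R b i)"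
    using is_latticeE[OF assms(1)] by blast
  define f where "f = (\<lambda>v::real^'n. \<Sum>i\<in>UNIV. v $ i *\<^sub>R b i)"
  have "linear f" unfolding f_def
    by (intro linearI) (simp_all add: sum.distrib scaleR_add_left scaleR_sum_right)
  then obtain g where "linear g" and "g \<circ> f = id"
    using linear_injective_left_inverse inj_basis_combination[OF b] unfolding f_def by blast
  then have gf: "g (f v) = v" for v by (metis comp_apply id_apply)
  obtain B where B: "\<And>x. norm (g x) \<le> B * norm x"
    using linear_bounded[OF \<open>linear g\<close>] by blast
  obtain r where r: "\<And>x. x \<in> S \<Longrightarrow> norm x \<le> r"
    using assms(2) unfolding bounded_iff by blast
  define N where "N = ceiling (\<bar>B\<bar> * \<bar>r\<bar>)"
  have "L \<inter> S \<subseteq> (\<lambda>c. \<Sum>i\<in>UNIV. real_of_int (c i) *\<^sub>R b i) ` (UNIV \<rightarrow>\<^sub>E {-N..N})"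
  proof
    fix y assume y: "y \<in> L \<inter> S"
    then obtain c where yc: "y = (\<Sum>i\<in>UNIV. real_of_int (c i) *\<^sub>R b i)" using L by blast
    have cN: "\<bar>c i\<bar> \<le> N" for i
    proof -
      have "g y = (\<chi> i. real_of_int (c i))" using gf[of "\<chi> i. real_of_int (c i)"] yc
        unfolding f_def by simp
      then have "\<bar>real_of_int (c i)\<bar> \<le> B * norm y"
        using component_le_norm_cart[of "g y" i] B[of y] by simp
      also have "\<dots> \<le> \<bar>B\<bar> * norm y" by (intro mult_right_mono) auto
      also have "\<dots> \<le> \<bar>B\<bar> * \<bar>r\<bar>" using r[of y] y by (intro mult_left_mono) auto
      finally show ?thesis unfolding N_def by linarith
    qed
    then show "y \<in> (\<lambda>c. \<Sum>i\<in>UNIV. real_of_int (c i) *\<^sub>R b i) ` (UNIV \<rightarrow>\<^sub>E {-N..N})"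
      using yc cN by (intro image_eqI[where x=c]) (auto simp: abs_le_iff minus_le_iff)
  qed
  then show ?thesis by (rule finite_subset) (simp add: finite_PiE)
qed

lemma lattice_points_covering_span:
  assumes "is_lattice L" "K \<subseteq> L"
  obtains R where "\<And>y. y \<in> span K \<Longrightarrow> \<exists>z\<in>L \<inter> span K. dist y z \<le> R"
proof -
  obtain B where B: "B \<subseteq> K" "independent B" "K \<subseteq> span B"
    using basis_exists[of K] by metis
  have spanB: "span K = span B"
    using B(1,3) span_superset by (auto simp: span_eq)
  have "finite B" using B(2) independent_bound by blast
  have "\<exists>z\<in>L \<inter> span K. dist y z \<le> (\<Sum>v\<in>B. norm v)" if "y \<in> span K" for y
  proof -
    obtain u where y: "y = (\<Sum>v\<in>B. u v *\<^sub>R v)"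
      using \<open>y \<in> span K\<close> span_finite[OF \<open>finite B\<close>] spanB by auto
    define z where "z = (\<Sum>v\<in>B. real_of_int \<lfloor>u v\<rfloor> *\<^sub>R v)"
    have "z \<in> L" unfolding z_def
      using B(1) assms by (intro lattice_sum lattice_scaleR_of_int) auto
    moreover have "z \<in> span K" unfolding z_def spanB
      by (intro span_sum span_scale span_base)
    moreover have "dist y z \<le> (\<Sum>v\<in>B. norm v)"
    proof -
      have "dist y z = norm (\<Sum>v\<in>B. (u v - real_of_int \<lfloor>u v\<rfloor>) *\<^sub>R v)"
        unfolding y z_def dist_norm by (simp add: sum_subtractf scaleR_diff_left)
      also have "\<dots> \<le> (\<Sum>v\<in>B. norm ((u v - real_of_int \<lfloor>u v\<rfloor>) *\<^sub>R v))"
        by (rule norm_sum)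
      also have "\<dots> \<le> (\<Sum>v\<in>B. norm v)"
      proof (rule sum_mono)
        fix v
        have "\<bar>u v - real_of_int \<lfloor>u v\<rfloor>\<bar> \<le> 1" by linarith
        then show "norm ((u v - real_of_int \<lfloor>u v\<rfloor>) *\<^sub>R v) \<le> norm v"
          by (simp add: mult_left_le_one_le)
      qed
      finally show ?thesis .
    qed
    ultimately show ?thesis by blast
  qed
  then show thesis by (rule that)
qed

section \<open>Powers of points\<close>

text \<open>The power of y with respect to the sphere with centre a and squared radius
  \<beta> + a \<bullet> a (see sphere_power_eq_dist); parametrised by \<beta> instead of the radius it is affine
  in (a, \<beta>).\<close>
definition sphere_power :: "'a::real_inner \<Rightarrow> real \<Rightarrow> 'a \<Rightarrow> real" where
  "sphere_power a \<beta> y = y \<bullet> y - 2 * (a \<bullet> y) - \<beta>"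

definition empty_power_sphere :: "'a::real_inner set \<Rightarrow> 'a \<Rightarrow> real \<Rightarrow> bool" where
  "empty_power_sphere M a \<beta> \<longleftrightarrow> (\<forall>y\<in>M. 0 \<le> sphere_power a \<beta> y)"

definition contacts :: "'a::real_inner set \<Rightarrow> 'a \<Rightarrow> real \<Rightarrow> 'a set" where
  "contacts M a \<beta> = {y\<in>M. sphere_power a \<beta> y = 0}"

lemma sphere_power_eq_dist: "sphere_power a \<beta> y = (dist a y)\<^sup>2 - (\<beta> + a \<bullet> a)"
  unfolding sphere_power_def dist_norm power2_norm_eq_inner
  by (simp add: inner_diff_left inner_diff_right inner_commute)

lemma sphere_power_shift:
  "sphere_power (a + t *\<^sub>R u) (\<beta> - 2 * t * m) y = sphere_power a \<beta> y - 2 * t * (u \<bullet> y - m)"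
  unfolding sphere_power_def by (simp add: algebra_simps)

lemma sphere_power_radius: "sphere_power c (r\<^sup>2 - c \<bullet> c) y = (dist c y)\<^sup>2 - r\<^sup>2"
  by (simp add: sphere_power_eq_dist)

lemma empty_sphere_iff_empty_power_sphere:
  assumes "0 \<le> r"
  shows "empty_sphere M c r \<longleftrightarrow> empty_power_sphere M c (r\<^sup>2 - c \<bullet> c)"
  unfolding empty_sphere_def empty_power_sphere_def sphere_power_radius
  using assms by (simp add: power2_le_iff_abs_le)

lemma Int_sphere_eq_contacts:
  assumes "0 \<le> r"
  shows "M \<inter> sphere c r = contacts M c (r\<^sup>2 - c \<bullet> c)"
  unfolding contacts_def sphere_power_radius
  using assms by auto

lemma sphere_power_shift_to_contact:
  fixes M :: "'a::real_inner set"
  assumes fin: "\<And>B. bounded B \<Longrightarrow> finite (M \<inter> B)"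
    and empty: "empty_power_sphere M a \<beta>" and y0: "y0 \<in> M" "m < u \<bullet> y0"
  obtains t ys where "0 \<le> t" "ys \<in> M" "m < u \<bullet> ys"
    "ys \<in> contacts M (a + t *\<^sub>R u) (\<beta> - 2 * t * m)"
    "empty_power_sphere M (a + t *\<^sub>R u) (\<beta> - 2 * t * m)"
proof -
  define f where "f y = sphere_power a \<beta> y / (2 * (u \<bullet> y - m))" for y
  define K where "K = {y\<in>M. m < u \<bullet> y \<and> sphere_power a \<beta> y \<le> 2 * f y0 * (u \<bullet> y - m)}"
  \<comment> \<open>The shift t is the least value of f on the half-space m < u \<bullet> y; it is attained since
    only the finitely many points of K have f y \<le> f y0.\<close>
  have "K \<subseteq> M \<inter> {y. y \<bullet> y \<le> (2 *\<^sub>R a + (2 * f y0) *\<^sub>R u) \<bullet> y + (\<beta> - 2 * f y0 * m)}"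
    unfolding K_def sphere_power_def by (auto simp: algebra_simps)
  then have "finite K" using fin[OF bounded_quadratic_sublevel] finite_subset by blast
  have "y0 \<in> K" unfolding K_def f_def using y0 by (simp add: field_simps)
  define t where "t = Min (f ` K)"
  have "t \<in> f ` K" unfolding t_def using \<open>finite K\<close> \<open>y0 \<in> K\<close> by (intro Min_in) auto
  then obtain ys where ys: "ys \<in> K" "t = f ys" by blast
  have t_le: "t \<le> f y" if "y \<in> M" "m < u \<bullet> y" for y
  proof (cases "y \<in> K")
    case True
    then show ?thesis unfolding t_def using \<open>finite K\<close> by (intro Min_le) auto
  next
    case False
    then have "2 * f y0 * (u \<bullet> y - m) < sphere_power a \<beta> y" using that unfolding K_def by auto
    then have "f y0 < f y" using that(2) unfolding f_def[of y] by (simp add: field_simps)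
    moreover have "t \<le> f y0" unfolding t_def using \<open>finite K\<close> \<open>y0 \<in> K\<close> by (intro Min_le) auto
    ultimately show ?thesis by simp
  qed
  have "0 \<le> t" using ys empty unfolding K_def f_def empty_power_sphere_def by auto
  moreover have "empty_power_sphere M (a + t *\<^sub>R u) (\<beta> - 2 * t * m)"
    unfolding empty_power_sphere_def sphere_power_shift
  proof
    fix y assume "y \<in> M"
    show "0 \<le> sphere_power a \<beta> y - 2 * t * (u \<bullet> y - m)"
    proof (cases "m < u \<bullet> y")
      case True
      then show ?thesis using t_le[OF \<open>y \<in> M\<close> True] unfolding f_def by (simp add: le_divide_eq algebra_simps)
    next
      case False
      then have "2 * t * (u \<bullet> y - m) \<le> 0" using \<open>0 \<le> t\<close> by (simp add: mult_nonneg_nonpos)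
      then show ?thesis using \<open>y \<in> M\<close> empty unfolding empty_power_sphere_def by fastforce
    qed
  qed
  moreover have "ys \<in> contacts M (a + t *\<^sub>R u) (\<beta> - 2 * t * m)"
    using ys unfolding contacts_def sphere_power_shift K_def f_def by (simp add: field_simps)
  ultimately show thesis using that ys(1) unfolding K_def by blast
qed

section \<open>Delaunay cells of a locally finite net in a subspace\<close>

locale locally_finite_net =
  fixes M S :: "'a::euclidean_space set" and R :: real
  assumes subspace: "subspace S"
    and subset: "M \<subseteq> S"
    and finite_Int_bounded: "bounded B \<Longrightarrow> finite (M \<inter> B)"
    and covering: "y \<in> S \<Longrightarrow> \<exists>z\<in>M. dist y z \<le> R"
begin

lemma finite_contacts: "finite (contacts M a \<beta>)"
proof -
  have "contacts M a \<beta> \<subseteq> M \<inter> {y. y \<bullet> y \<le> (2 *\<^sub>R a) \<bullet> y + \<beta>}"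
    unfolding contacts_def sphere_power_def by auto
  then show ?thesis using finite_Int_bounded[OF bounded_quadratic_sublevel] finite_subset by blast
qed

lemma aff_dim_contacts_le: "aff_dim (contacts M a \<beta>) \<le> int (dim S)"
proof -
  have "aff_dim (contacts M a \<beta>) \<le> aff_dim S"
    using subset unfolding contacts_def by (intro aff_dim_subset) auto
  then show ?thesis using aff_dim_subspace[OF subspace] by simp
qed

lemma exists_point_beyond:
  assumes "u \<in> S" "p \<in> S"
  obtains y where "y \<in> M" "u \<bullet> p \<le> u \<bullet> y"
proof -
  \<comment> \<open>For u = 0 the division yields 0 and the claim is trivial.\<close>
  define q where "q = p + (\<bar>R\<bar> / norm u) *\<^sub>R u"
  have "q \<in> S" unfolding q_def using assms subspace by (simp add: subspace_add subspace_scale)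
  then obtain z where z: "z \<in> M" "dist q z \<le> R" using covering by blast
  have "u \<bullet> q - u \<bullet> z \<le> norm u * norm (q - z)"
    using Cauchy_Schwarz_ineq2[of u "q - z"] by (simp add: inner_diff_right)
  also have "\<dots> \<le> norm u * \<bar>R\<bar>" using z(2) by (intro mult_left_mono) (auto simp: dist_norm)
  finally have "u \<bullet> q - norm u * \<bar>R\<bar> \<le> u \<bullet> z" by simp
  moreover have "u \<bullet> q = u \<bullet> p + norm u * \<bar>R\<bar>"
    unfolding q_def by (simp add: inner_add_right dot_square_norm power2_eq_square)
  ultimately show thesis using that z(1) by simp
qed

lemma bounded_feasible_spheres:
  "bounded {(a, \<beta>). a \<in> S \<and> empty_power_sphere M a \<beta> \<and> sphere_power a \<beta> x \<le> 0}"
proof -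
  have "\<bar>\<beta>\<bar> \<le> R\<^sup>2 + (norm x + \<bar>R\<bar>)\<^sup>2 \<and> norm a \<le> norm x + \<bar>R\<bar>"
    if "a \<in> S" "empty_power_sphere M a \<beta>" "sphere_power a \<beta> x \<le> 0" for a \<beta>
  proof -
    obtain z where z: "z \<in> M" "dist a z \<le> R" using covering \<open>a \<in> S\<close> by blast
    have "\<beta> + a \<bullet> a \<le> (dist a z)\<^sup>2"
      using that(2) z(1) unfolding empty_power_sphere_def sphere_power_eq_dist by auto
    also have "\<dots> \<le> R\<^sup>2" using z(2) by (intro power_mono) auto
    finally have radius: "\<beta> + a \<bullet> a \<le> R\<^sup>2" .
    have x_inside: "(dist a x)\<^sup>2 \<le> \<beta> + a \<bullet> a" using that(3) unfolding sphere_power_eq_dist by simp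
    then have "(dist a x)\<^sup>2 \<le> R\<^sup>2" using radius by linarith
    then have "dist a x \<le> \<bar>R\<bar>" using abs_le_square_iff[of "dist a x" R] by simp
    then have a: "norm a \<le> norm x + \<bar>R\<bar>" using norm_triangle_sub[of a x] by (simp add: dist_norm)
    then have "a \<bullet> a \<le> (norm x + \<bar>R\<bar>)\<^sup>2" by (simp add: dot_square_norm power_mono)
    with radius x_inside a show ?thesis unfolding abs_le_iff
      using zero_le_power2[of "dist a x"] zero_le_power2[of R] inner_ge_zero[of a] by linarith
  qed
  then have "{(a, \<beta>). a \<in> S \<and> empty_power_sphere M a \<beta> \<and> sphere_power a \<beta> x \<le> 0}
      \<subseteq> cball 0 (norm x + \<bar>R\<bar>) \<times> cball 0 (R\<^sup>2 + (norm x + \<bar>R\<bar>)\<^sup>2)" by auto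
  then show ?thesis by (rule bounded_subset[OF bounded_Times[OF bounded_cball bounded_cball]])
qed

lemma closed_feasible_spheres:
  "closed {(a, \<beta>). a \<in> S \<and> empty_power_sphere M a \<beta> \<and> sphere_power a \<beta> x \<le> 0}"
proof -
  have eq: "{(a, \<beta>). a \<in> S \<and> empty_power_sphere M a \<beta> \<and> sphere_power a \<beta> x \<le> 0}
      = (S \<times> UNIV) \<inter> (\<Inter>y\<in>M. {p. 0 \<le> sphere_power (fst p) (snd p) y})
        \<inter> {p. sphere_power (fst p) (snd p) x \<le> 0}"
    unfolding empty_power_sphere_def by auto
  have "closed (S \<times> (UNIV :: real set))" by (simp add: closed_Times closed_subspace subspace)
  then show ?thesis unfolding eq unfolding sphere_power_def
    by (intro closed_Int closed_INT ballI closed_Collect_le continuous_intros)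
qed

lemma power_decreases_outside_contacts_hull:
  assumes x: "x \<in> S" and a: "a \<in> S" and empty: "empty_power_sphere M a \<beta>"
    and outside: "x \<notin> convex hull (contacts M a \<beta>)"
  obtains a' \<beta>' where "a' \<in> S" "empty_power_sphere M a' \<beta>'" "sphere_power a' \<beta>' x < sphere_power a \<beta> x"
proof -
  have "closed (convex hull (contacts M a \<beta>))"
    by (simp add: compact_imp_closed finite_contacts finite_imp_compact_convex_hull)
  then obtain u m where u: "u \<in> S" "m < u \<bullet> x"
    and sep: "\<And>y. y \<in> convex hull (contacts M a \<beta>) \<Longrightarrow> y \<in> S \<Longrightarrow> u \<bullet> y < m"
    using separating_hyperplane_in_subspace[OF subspace _ convex_convex_hull x outside] by blast
  have sep_contacts: "u \<bullet> y < m" if "y \<in> contacts M a \<beta>" for y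
    using sep[OF hull_inc[OF that]] that subset unfolding contacts_def by auto
  obtain y0 where "y0 \<in> M" "u \<bullet> x \<le> u \<bullet> y0" using exists_point_beyond[OF u(1) x] .
  with u(2) have "m < u \<bullet> y0" by linarith
  then obtain t ys where "0 \<le> t" "m < u \<bullet> ys"
    and ys: "ys \<in> contacts M (a + t *\<^sub>R u) (\<beta> - 2 * t * m)"
    and empty': "empty_power_sphere M (a + t *\<^sub>R u) (\<beta> - 2 * t * m)"
    using sphere_power_shift_to_contact[OF finite_Int_bounded empty \<open>y0 \<in> M\<close>] by blast
  have "t \<noteq> 0"
  proof
    assume "t = 0"
    then have "ys \<in> contacts M a \<beta>" using ys by simp
    then show False using sep_contacts \<open>m < u \<bullet> ys\<close> by fastforce
  qed
  then have "sphere_power (a + t *\<^sub>R u) (\<beta> - 2 * t * m) x < sphere_power a \<beta> x"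
    unfolding sphere_power_shift using \<open>0 \<le> t\<close> u(2) by simp
  moreover have "a + t *\<^sub>R u \<in> S" using a u(1) subspace by (simp add: subspace_add subspace_scale)
  ultimately show thesis using that empty' by blast
qed

lemma exists_contacts_hull:
  assumes "x \<in> S"
  obtains a \<beta> where "a \<in> S" "empty_power_sphere M a \<beta>" "x \<in> convex hull (contacts M a \<beta>)"
proof -
  define F where "F = {(a, \<beta>). a \<in> S \<and> empty_power_sphere M a \<beta> \<and> sphere_power a \<beta> x \<le> 0}"
  have "compact F" unfolding F_def
    using bounded_feasible_spheres closed_feasible_spheres by (simp add: compact_eq_bounded_closed)
  moreover have "(x, - (x \<bullet> x)) \<in> F"
    unfolding F_def empty_power_sphere_def using assms by (simp add: sphere_power_eq_dist)
  moreover have "continuous_on F (\<lambda>p. sphere_power (fst p) (snd p) x)"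
    unfolding sphere_power_def by (intro continuous_intros)
  ultimately obtain a \<beta> where "(a, \<beta>) \<in> F"
    and min: "\<And>a' \<beta>'. (a', \<beta>') \<in> F \<Longrightarrow> sphere_power a \<beta> x \<le> sphere_power a' \<beta>' x"
    using continuous_attains_inf[of F] by fastforce
  then have a: "a \<in> S" and empty: "empty_power_sphere M a \<beta>" and "sphere_power a \<beta> x \<le> 0"
    unfolding F_def by auto
  have "x \<in> convex hull (contacts M a \<beta>)"
  proof (rule ccontr)
    assume "x \<notin> convex hull (contacts M a \<beta>)"
    then obtain a' \<beta>' where "a' \<in> S" "empty_power_sphere M a' \<beta>'"
      and smaller: "sphere_power a' \<beta>' x < sphere_power a \<beta> x"
      using power_decreases_outside_contacts_hull[OF assms a empty] by blast
    then have "(a', \<beta>') \<in> F" unfolding F_def using \<open>sphere_power a \<beta> x \<le> 0\<close> by simp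
    then show False using min smaller by fastforce
  qed
  then show thesis using that a empty by blast
qed

lemma contacts_grow:
  assumes a: "a \<in> S" and empty: "empty_power_sphere M a \<beta>" and p: "p \<in> contacts M a \<beta>"
    and low: "aff_dim (contacts M a \<beta>) < dim S"
  obtains a' \<beta>' where "a' \<in> S" "empty_power_sphere M a' \<beta>'"
    "contacts M a \<beta> \<subseteq> contacts M a' \<beta>'" "aff_dim (contacts M a \<beta>) < aff_dim (contacts M a' \<beta>')"
proof -
  let ?C = "contacts M a \<beta>"
  have "?C \<subseteq> S" using subset unfolding contacts_def by auto
  then obtain u where u: "u \<in> S" "u \<noteq> 0" and level: "\<And>q. q \<in> ?C \<Longrightarrow> u \<bullet> q = u \<bullet> p"
    using exists_normal_in_subspace[OF subspace _ p low] by metis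
  have "p \<in> S" using \<open>?C \<subseteq> S\<close> p by blast
  then have "p + u \<in> S" using u(1) subspace by (simp add: subspace_add)
  then obtain y0 where "y0 \<in> M" "u \<bullet> (p + u) \<le> u \<bullet> y0" using exists_point_beyond[OF u(1)] by metis
  moreover have "u \<bullet> p < u \<bullet> (p + u)" using u(2) by (simp add: inner_add_right)
  ultimately have "u \<bullet> p < u \<bullet> y0" by linarith
  then obtain t ys where ys: "u \<bullet> p < u \<bullet> ys" "ys \<in> contacts M (a + t *\<^sub>R u) (\<beta> - 2 * t * (u \<bullet> p))"
    and empty': "empty_power_sphere M (a + t *\<^sub>R u) (\<beta> - 2 * t * (u \<bullet> p))"
    using sphere_power_shift_to_contact[OF finite_Int_bounded empty \<open>y0 \<in> M\<close>] by metis
  let ?C' = "contacts M (a + t *\<^sub>R u) (\<beta> - 2 * t * (u \<bullet> p))"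
  have "?C \<subseteq> ?C'" using level unfolding contacts_def sphere_power_shift by auto
  have "affine hull ?C \<subseteq> {z. u \<bullet> z = u \<bullet> p}"
    using level by (intro hull_minimal) (auto simp: affine_hyperplane)
  then have "ys \<notin> affine hull ?C" using ys(1) by auto
  then have "aff_dim ?C < aff_dim (insert ys ?C)" by (simp add: aff_dim_insert)
  also have "\<dots> \<le> aff_dim ?C'" using \<open>?C \<subseteq> ?C'\<close> ys(2) by (intro aff_dim_subset) auto
  finally have "aff_dim ?C < aff_dim ?C'" .
  moreover have "a + t *\<^sub>R u \<in> S" using a u(1) subspace by (simp add: subspace_add subspace_scale)
  ultimately show thesis using that empty' \<open>?C \<subseteq> ?C'\<close> by blast
qed

lemma contacts_extend_full:
  assumes "a \<in> S" "empty_power_sphere M a \<beta>" "contacts M a \<beta> \<noteq> {}"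
  obtains a' \<beta>' where "a' \<in> S" "empty_power_sphere M a' \<beta>'"
    "contacts M a \<beta> \<subseteq> contacts M a' \<beta>'" "aff_dim (contacts M a' \<beta>') = dim S"
  using assms
proof (induction "nat (int (dim S) - aff_dim (contacts M a \<beta>))" arbitrary: a \<beta> rule: less_induct)
  case less
  show ?case
  proof (cases "aff_dim (contacts M a \<beta>) = dim S")
    case True
    then show ?thesis using less.prems by blast
  next
    case False
    then have low: "aff_dim (contacts M a \<beta>) < dim S" using aff_dim_contacts_le[of a \<beta>] by linarith
    obtain p where p: "p \<in> contacts M a \<beta>" using less.prems(4) by blast
    obtain a' \<beta>' where a': "a' \<in> S" "empty_power_sphere M a' \<beta>'"
      "contacts M a \<beta> \<subseteq> contacts M a' \<beta>'" "aff_dim (contacts M a \<beta>) < aff_dim (contacts M a' \<beta>')"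
      using contacts_grow[OF less.prems(2,3) p low] by blast
    have "nat (int (dim S) - aff_dim (contacts M a' \<beta>')) < nat (int (dim S) - aff_dim (contacts M a \<beta>))"
      using a'(4) low by linarith
    then show ?thesis
      using less.hyps[OF _ _ a'(1,2)] less.prems(1) a'(3) p by blast
  qed
qed

lemma exists_full_dim_contacts_hull:
  assumes "x \<in> S"
  obtains a \<beta> where "a \<in> S" "empty_power_sphere M a \<beta>" "x \<in> convex hull (contacts M a \<beta>)"
    "aff_dim (contacts M a \<beta>) = dim S"
proof -
  obtain a \<beta> where a: "a \<in> S" "empty_power_sphere M a \<beta>" "x \<in> convex hull (contacts M a \<beta>)"
    using exists_contacts_hull[OF assms] .
  then have "contacts M a \<beta> \<noteq> {}" by auto
  then obtain a' \<beta>' where "a' \<in> S" "empty_power_sphere M a' \<beta>'"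
    "contacts M a \<beta> \<subseteq> contacts M a' \<beta>'" "aff_dim (contacts M a' \<beta>') = dim S"
    using contacts_extend_full[OF a(1,2)] by blast
  then show thesis using that a(3) hull_mono by blast
qed

end

section \<open>Delaunay polytopes of a lattice\<close>

lemma delaunay_polytope_contacts:
  fixes L P :: "(real^'n) set"
  assumes "delaunay_polytope L P"
  obtains c \<beta> where "empty_power_sphere L c \<beta>" "P = convex hull (contacts L c \<beta>)"
    "aff_dim P = CARD('n)"
proof -
  obtain c r where cr: "empty_sphere L c r" "P = convex hull (L \<inter> sphere c r)"
    "aff_dim P = CARD('n)"
    using assms unfolding delaunay_polytope_def by blast
  have "0 \<le> r"
  proof (rule ccontr)
    assume "\<not> 0 \<le> r"
    then have "aff_dim P = -1" using cr(2) by simp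
    then show False using cr(3) by simp
  qed
  then show thesis
    using that cr by (simp add: empty_sphere_iff_empty_power_sphere Int_sphere_eq_contacts)
qed

lemma interior_delaunay_polytope_nonempty:
  fixes L P :: "(real^'n) set"
  assumes "delaunay_polytope L P"
  shows "interior P \<noteq> {}"
proof -
  obtain c r where P: "P = convex hull (L \<inter> sphere c r)" "aff_dim P = CARD('n)"
    using assms unfolding delaunay_polytope_def by blast
  then have "P \<noteq> {}" by auto
  then have "rel_interior P \<noteq> {}" using P(1) by (simp add: rel_interior_eq_empty)
  then show ?thesis using P(2) by (simp add: interior_rel_interior_gen)
qed

lemma delaunay_polytopes_eq_if_interiors_meet:
  fixes L P P' :: "(real^'n) set"
  assumes "delaunay_polytope L P" "delaunay_polytope L P'" "interior P \<inter> interior P' \<noteq> {}"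
  shows "P = P'"
proof -
  obtain c \<beta> where c: "empty_power_sphere L c \<beta>" "P = convex hull (contacts L c \<beta>)"
    using delaunay_polytope_contacts[OF assms(1)] by metis
  obtain c' \<beta>' where c': "empty_power_sphere L c' \<beta>'" "P' = convex hull (contacts L c' \<beta>')"
    using delaunay_polytope_contacts[OF assms(2)] by metis
  define d where "d = 2 *\<^sub>R (c' - c)"
  have power_diff: "sphere_power c \<beta> y - sphere_power c' \<beta>' y = d \<bullet> y + (\<beta>' - \<beta>)" for y
    unfolding sphere_power_def d_def by (simp add: algebra_simps)
  have "contacts L c \<beta> \<subseteq> {y. d \<bullet> y \<le> \<beta> - \<beta>'}"
  proof
    fix y assume "y \<in> contacts L c \<beta>"
    then show "y \<in> {y. d \<bullet> y \<le> \<beta> - \<beta>'}"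
      using power_diff[of y] c'(1) by (auto simp: contacts_def empty_power_sphere_def)
  qed
  then have P_below: "P \<subseteq> {y. d \<bullet> y \<le> \<beta> - \<beta>'}"
    unfolding c(2) by (intro hull_minimal) (auto simp: convex_halfspace_le)
  have "contacts L c' \<beta>' \<subseteq> {y. \<beta> - \<beta>' \<le> d \<bullet> y}"
  proof
    fix y assume "y \<in> contacts L c' \<beta>'"
    then show "y \<in> {y. \<beta> - \<beta>' \<le> d \<bullet> y}"
      using power_diff[of y] c(1) by (auto simp: contacts_def empty_power_sphere_def)
  qed
  then have P'_above: "P' \<subseteq> {y. \<beta> - \<beta>' \<le> d \<bullet> y}"
    unfolding c'(2) by (intro hull_minimal) (auto simp: convex_halfspace_ge)
  have level: "d \<bullet> y = \<beta> - \<beta>'" if "y \<in> interior P \<inter> interior P'" for y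
  proof -
    have "y \<in> P" "y \<in> P'" using that interior_subset by blast+
    then show ?thesis using subsetD[OF P_below \<open>y \<in> P\<close>] subsetD[OF P'_above \<open>y \<in> P'\<close>] by simp
  qed
  obtain x where x: "x \<in> interior P \<inter> interior P'" using assms(3) by blast
  then have "d = 0" using level by (intro inner_const_on_open_imp_zero[of "interior P \<inter> interior P'" x]) auto
  with level[OF x] have "c = c'" "\<beta> = \<beta>'" unfolding d_def by auto
  then show ?thesis using c(2) c'(2) by simp
qed

lemma delaunay_polytope_translation:
  fixes L P :: "(real^'n) set"
  assumes L: "is_lattice L" and "v \<in> L" and "delaunay_polytope L P"
  shows "delaunay_polytope L ((+) v ` P)"
proof -
  obtain c r where cr: "empty_sphere L c r" "P = convex hull (L \<inter> sphere c r)" "aff_dim P = CARD('n)"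
    using assms(3) unfolding delaunay_polytope_def by blast
  have "empty_sphere L (v + c) r" unfolding empty_sphere_def
  proof
    fix y assume "y \<in> L"
    then have "r \<le> dist c (y - v)" using cr(1) lattice_diff[OF L _ \<open>v \<in> L\<close>] unfolding empty_sphere_def by blast
    then show "r \<le> dist (v + c) y" by (simp add: dist_norm algebra_simps)
  qed
  moreover have "(+) v ` (L \<inter> sphere c r) = (+) v ` L \<inter> (+) v ` sphere c r"
    by (simp add: image_Int)
  then have "(+) v ` (L \<inter> sphere c r) = L \<inter> sphere (v + c) r"
    by (simp add: sphere_translation lattice_translation[OF L \<open>v \<in> L\<close>])
  then have "(+) v ` P = convex hull (L \<inter> sphere (v + c) r)"
    using convex_hull_translation[of v "L \<inter> sphere c r"] cr(2) by metis
  moreover have "aff_dim ((+) v ` P) = CARD('n)" using cr(3) by (simp add: aff_dim_translation_eq)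
  ultimately show ?thesis unfolding delaunay_polytope_def by blast
qed

lemma facet_of_delaunay_polytope_disjoint_interior:
  fixes L P P' Q :: "(real^'n) set"
  assumes P: "delaunay_polytope L P" and P': "delaunay_polytope L P'" and "Q facet_of P'"
  shows "Q \<inter> interior P = {}"
proof (rule ccontr)
  assume "Q \<inter> interior P \<noteq> {}"
  then obtain x where x: "x \<in> Q" "x \<in> interior P" by blast
  have "convex P'" using P' unfolding delaunay_polytope_def by auto
  then have "P' \<subseteq> closure (interior P')"
    using convex_closure_interior[OF _ interior_delaunay_polytope_nonempty[OF P']] closure_subset
    by blast
  moreover have "x \<in> P'" using x(1) \<open>Q facet_of P'\<close> face_of_imp_subset unfolding facet_of_def by blast
  ultimately have "interior P \<inter> closure (interior P') \<noteq> {}" using x(2) by blast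
  then have "interior P \<inter> interior P' \<noteq> {}" by (simp add: open_Int_closure_eq_empty)
  then have "P = P'" by (rule delaunay_polytopes_eq_if_interiors_meet[OF P P'])
  then have "Q face_of P" "Q \<noteq> P" using \<open>Q facet_of P'\<close> unfolding facet_of_def by auto
  then have "Q \<inter> interior P = {}" by (rule face_of_disjoint_interior)
  then show False using x by blast
qed

section \<open>Laminae\<close>

lemma delaunay_polytope_in_contacts_hull:
  fixes L H :: "(real^'n) set"
  assumes "a \<in> H" "empty_power_sphere (L \<inter> H) a \<beta>"
    and dim: "aff_dim (contacts (L \<inter> H) a \<beta>) = int CARD('n) - 1"
  shows "delaunay_polytope_in L H (convex hull (contacts (L \<inter> H) a \<beta>))"
proof -
  have "contacts (L \<inter> H) a \<beta> \<noteq> {}"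
  proof
    assume "contacts (L \<inter> H) a \<beta> = {}"
    then show False using dim by simp
  qed
  then obtain y where "sphere_power a \<beta> y = 0" unfolding contacts_def by blast
  then have "0 \<le> \<beta> + a \<bullet> a"
    unfolding sphere_power_eq_dist using zero_le_power2[of "dist a y"] by linarith
  define r where "r = sqrt (\<beta> + a \<bullet> a)"
  have "0 \<le> r" "\<beta> = r\<^sup>2 - a \<bullet> a" unfolding r_def using \<open>0 \<le> \<beta> + a \<bullet> a\<close> by simp_all
  then have "empty_sphere (L \<inter> H) a r" "contacts (L \<inter> H) a \<beta> = (L \<inter> H) \<inter> sphere a r"
    using assms(2) by (simp_all add: empty_sphere_iff_empty_power_sphere Int_sphere_eq_contacts)
  then show ?thesis
    unfolding delaunay_polytope_in_def using assms(1) dim by (auto simp: aff_dim_convex_hull)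
qed

lemma delaunay_polytopes_in_cover_lattice_hyperplane:
  fixes L H :: "(real^'n) set"
  assumes L: "is_lattice L" and H: "lattice_hyperplane L H" and "x \<in> H"
  obtains Q where "delaunay_polytope_in L H Q" "x \<in> Q"
proof -
  have "subspace H" and dimH: "dim H = CARD('n) - 1"
    using H unfolding lattice_hyperplane_def by auto
  have "span (L \<inter> H) = H"
  proof (rule subspace_dim_equal)
    show "span (L \<inter> H) \<subseteq> H" using \<open>subspace H\<close> by (simp add: span_minimal)
    show "dim H \<le> dim (span (L \<inter> H))"
      using H unfolding lattice_hyperplane_def by (simp add: Int_commute)
  qed (simp_all add: \<open>subspace H\<close>)
  moreover obtain R where R: "\<And>y. y \<in> span (L \<inter> H) \<Longrightarrow> \<exists>z\<in>L \<inter> span (L \<inter> H). dist y z \<le> R"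
    using lattice_points_covering_span[OF L, of "L \<inter> H"] by blast
  ultimately interpret locally_finite_net "L \<inter> H" H R
  proof unfold_locales
    show "finite (L \<inter> H \<inter> B)" if "bounded B" for B
      using finite_lattice_Int_bounded[OF L that] by (rule finite_subset[rotated]) blast
  qed (use \<open>subspace H\<close> in auto)
  obtain a \<beta> where "a \<in> H" "empty_power_sphere (L \<inter> H) a \<beta>"
    "x \<in> convex hull (contacts (L \<inter> H) a \<beta>)" "aff_dim (contacts (L \<inter> H) a \<beta>) = dim H"
    using exists_full_dim_contacts_hull[OF \<open>x \<in> H\<close>] by blast
  then show thesis
    using that delaunay_polytope_in_contacts_hull \<open>dim H = CARD('n) - 1\<close> by fastforce
qed

lemma lamina_disjoint_interior_delaunay_polytope:
  fixes L H P :: "(real^'n) set"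
  assumes L: "is_lattice L" and lam: "lamina L H" and P: "delaunay_polytope L P"
  shows "H \<inter> interior P = {}"
proof -
  have "x \<notin> interior P" if "x \<in> H" for x
  proof -
    obtain Q where Q: "delaunay_polytope_in L H Q" "x \<in> Q"
      using delaunay_polytopes_in_cover_lattice_hyperplane[OF L _ \<open>x \<in> H\<close>] lam
      unfolding lamina_def by blast
    then obtain P' where "delaunay_polytope L P'" "Q facet_of P'"
      using lam unfolding lamina_def by blast
    then show ?thesis using facet_of_delaunay_polytope_disjoint_interior[OF P] Q(2) by blast
  qed
  then show ?thesis by blast
qed

lemma delaunay_polytope_no_lattice_level_between:
  fixes L H P :: "(real^'n) set"
  assumes L: "is_lattice L" and lam: "lamina L H" and H: "H = {x. w \<bullet> x = 0}"
    and P: "delaunay_polytope L P" and "p \<in> P" "q \<in> P" "v \<in> L"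
  shows "\<not> (w \<bullet> p < w \<bullet> v \<and> w \<bullet> v < w \<bullet> q)"
proof
  assume between: "w \<bullet> p < w \<bullet> v \<and> w \<bullet> v < w \<bullet> q"
  define P' where "P' = (+) (- v) ` P"
  have "- v \<in> L" using lattice_diff[OF L lattice_zero[OF L] \<open>v \<in> L\<close>] by simp
  then have P': "delaunay_polytope L P'" unfolding P'_def by (rule delaunay_polytope_translation[OF L _ P])
  then have "convex P'" unfolding delaunay_polytope_def by auto
  moreover have "- v + p \<in> P'" "- v + q \<in> P'" unfolding P'_def using \<open>p \<in> P\<close> \<open>q \<in> P\<close> by auto
  moreover have "w \<bullet> (- v + p) < 0" "0 < w \<bullet> (- v + q)" using between by (auto simp: inner_diff_right)
  ultimately obtain x where "x \<in> interior P'" "w \<bullet> x = 0"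
    using convex_interior_meets_hyperplane interior_delaunay_polytope_nonempty[OF P'] by metis
  then show False using lamina_disjoint_interior_delaunay_polytope[OF L lam P'] H by blast
qed

lemma lattice_hyperplane_normal:
  fixes L H :: "(real^'n) set"
  assumes "lattice_hyperplane L H"
  obtains w where "w \<noteq> 0" "H = {x. w \<bullet> x = 0}"
proof -
  have "subspace H" "dim H = DIM(real^'n) - 1"
    using assms unfolding lattice_hyperplane_def by auto
  then show thesis using that dim_eq_hyperplane[of H] span_eq_iff[of H] by metis
qed

lemma neighboring_lattice_levels:
  fixes L H :: "(real^'n) set"
  assumes H: "H = {x. w \<bullet> x = 0}" and "p \<in> L" "q \<in> L" "w \<bullet> p < w \<bullet> q"
    and gap: "\<And>v. v \<in> L \<Longrightarrow> \<not> (w \<bullet> p < w \<bullet> v \<and> w \<bullet> v < w \<bullet> q)"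
  shows "neighboring L H {y. w \<bullet> y = w \<bullet> p} {y. w \<bullet> y = w \<bullet> q}"
proof -
  have translate: "(\<lambda>x. x + v) ` H = {y. w \<bullet> y = w \<bullet> v}" for v
    unfolding H by (rule translation_hyperplane)
  have "convex hull ({y. w \<bullet> y = w \<bullet> p} \<union> {y. w \<bullet> y = w \<bullet> q}) \<subseteq> {y. w \<bullet> p \<le> w \<bullet> y \<and> w \<bullet> y \<le> w \<bullet> q}"
    using \<open>w \<bullet> p < w \<bullet> q\<close>
    by (intro hull_minimal) (auto simp: convex_Int convex_halfspace_ge convex_halfspace_le Collect_conj_eq)
  then have "C = {y. w \<bullet> y = w \<bullet> p} \<or> C = {y. w \<bullet> y = w \<bullet> q}"
    if "C \<in> translates L H" "C \<subseteq> convex hull ({y. w \<bullet> y = w \<bullet> p} \<union> {y. w \<bullet> y = w \<bullet> q})" for C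
    using that gap unfolding translates_def translate by force
  moreover have "{y. w \<bullet> y = w \<bullet> p} \<in> translates L H" "{y. w \<bullet> y = w \<bullet> q} \<in> translates L H"
    unfolding translates_def translate using \<open>p \<in> L\<close> \<open>q \<in> L\<close> by blast+
  moreover have "{y. w \<bullet> y = w \<bullet> p} \<noteq> {y. w \<bullet> y = w \<bullet> q}" using \<open>w \<bullet> p < w \<bullet> q\<close> by auto
  ultimately show ?thesis unfolding neighboring_def by blast
qed

lemma delaunay_polytope_vertices_two_lattice_levels:
  fixes L H P :: "(real^'n) set"
  assumes L: "is_lattice L" and lam: "lamina L H" and H: "H = {x. w \<bullet> x = 0}" and "w \<noteq> 0"
    and P: "delaunay_polytope L P" and PV: "P = convex hull (L \<inter> sphere c r)"
  obtains p q where "p \<in> L" "q \<in> L" "w \<bullet> p < w \<bullet> q"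
    "\<And>v. v \<in> L \<Longrightarrow> \<not> (w \<bullet> p < w \<bullet> v \<and> w \<bullet> v < w \<bullet> q)"
    "L \<inter> sphere c r \<subseteq> {y. w \<bullet> y = w \<bullet> p} \<union> {y. w \<bullet> y = w \<bullet> q}"
proof -
  let ?V = "L \<inter> sphere c r"
  have gap: "\<not> (w \<bullet> p < w \<bullet> v \<and> w \<bullet> v < w \<bullet> q)" if "p \<in> ?V" "q \<in> ?V" "v \<in> L" for p q v
  proof -
    have "p \<in> P" "q \<in> P" using that(1,2) unfolding PV by (simp_all add: hull_inc)
    then show ?thesis by (rule delaunay_polytope_no_lattice_level_between[OF L lam H P _ _ that(3)])
  qed
  have "finite ?V" by (rule finite_lattice_Int_bounded[OF L bounded_sphere])
  moreover have "aff_dim P = DIM(real^'n)" using P unfolding delaunay_polytope_def by auto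
  then have "aff_dim ?V = DIM(real^'n)" unfolding PV by (simp add: aff_dim_convex_hull)
  moreover have "\<And>p q y. p \<in> ?V \<Longrightarrow> q \<in> ?V \<Longrightarrow> y \<in> ?V \<Longrightarrow> \<not> (w \<bullet> p < w \<bullet> y \<and> w \<bullet> y < w \<bullet> q)"
    using gap by blast
  ultimately obtain p q where "p \<in> ?V" "q \<in> ?V" "w \<bullet> p < w \<bullet> q"
    "?V \<subseteq> {y. w \<bullet> y = w \<bullet> p} \<union> {y. w \<bullet> y = w \<bullet> q}"
    using full_dim_set_on_two_levels \<open>w \<noteq> 0\<close> by blast
  then show thesis using that gap by blast
qed

theorem mainTheorem2:
  fixes L H :: "(real^'n) set"
  assumes "is_lattice L"
    and "lamina L H"
    and "delaunay_polytope L P"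
  shows "\<exists>A B. neighboring L H A B \<and> P \<subseteq> convex hull (A \<union> B) \<and>
           {v. v extreme_point_of P} \<subseteq> A \<union> B"
proof -
  obtain w where w: "w \<noteq> 0" "H = {x. w \<bullet> x = 0}"
    using assms(2) lattice_hyperplane_normal unfolding lamina_def by blast
  obtain c r where P: "P = convex hull (L \<inter> sphere c r)"
    using assms(3) unfolding delaunay_polytope_def by blast
  obtain p q where pq: "p \<in> L" "q \<in> L" "w \<bullet> p < w \<bullet> q"
    and gap: "\<And>v. v \<in> L \<Longrightarrow> \<not> (w \<bullet> p < w \<bullet> v \<and> w \<bullet> v < w \<bullet> q)"
    and V: "L \<inter> sphere c r \<subseteq> {y. w \<bullet> y = w \<bullet> p} \<union> {y. w \<bullet> y = w \<bullet> q}"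
    using delaunay_polytope_vertices_two_lattice_levels[OF assms(1,2) w(2,1) assms(3) P] by blast
  have "neighboring L H {y. w \<bullet> y = w \<bullet> p} {y. w \<bullet> y = w \<bullet> q}"
    by (rule neighboring_lattice_levels[OF w(2) pq gap])
  moreover have "P \<subseteq> convex hull ({y. w \<bullet> y = w \<bullet> p} \<union> {y. w \<bullet> y = w \<bullet> q})"
    unfolding P using V by (rule hull_mono)
  moreover have "{v. v extreme_point_of P} \<subseteq> {y. w \<bullet> y = w \<bullet> p} \<union> {y. w \<bullet> y = w \<bullet> q}"
    using V extreme_point_of_convex_hull unfolding P by blast
  ultimately show ?thesis by blast
qed

end
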